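(* Let $Z=(Z^i)_{i\in\mathbf{I}}$ be a time homogeneous counting process with generic intensities $\phi^i$, and for each $i$ let $\mathbf{V}^i=\{v^i_k,k\in\mathbb{N}\}$ be a coherent family of neighborhoods which is increasing ($v^i_k\subset v^i_{k+1}$ for all $k$). Let $\mathcal{Y}\subset\mathcal{X}$ be such that $$\sup_{i\in\mathbf{I}}\ \sup_{x,y\in\mathcal{Y}:\,x\overset{v^i_k}{=}y}|\phi^i(x)-\phi^i(y)|\to 0\quad (k\to\infty).$$ Define $\Delta^i_{v^i_0}(x)=\inf\{\phi^i(y):y\in\mathcal{Y},\,y\overset{v^i_0}{=}x\}$ and, for $k>0$, $\Delta^i_{v^i_k}(x)=\inf\{\phi^i(y):y\in\mathcal{Y},\,y\overset{v^i_k}{=}x\}-\inf\{\phi^i(y):y\in\mathcal{Y},\,y\overset{v^i_{k-1}}{=}x\}$. Then for any probabilities $\lambda^i$ on $\mathbf{V}^i$ such that $\lambda^i(v)=0$ only if $\sup_{x\in\mathcal{X}\cap\mathcal{Y}}\Delta^i_v(x)=0$, the process $(Z^i)$ admits the Kalikow decomposition with respect to $(\mathbf{V}^i)_{i\in\mathbf{I}}$ and $\mathcal{Y}$, with weights $\lambda^i(v)$ and cylindrical functions $\phi^i_v=\Delta^i_v/\lambda^i(v)$ (convention $0/0=0$).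
   Context: $\mathbf{I}$ is countable; $\mathcal{X}$ is the set of configurations $x=(\{t^i_n\}_n)_{i\in\mathbf{I}}$ of locally finite point sets in $(-\infty,0)$. A neighborhood is a Borel subset $v\subset\mathbf{I}\times(-\infty,0)$, finite if contained in $J\times[a,b]$ with $J$ finite; $x\overset{v}{=}y$ means $x,y$ have the same points in $v$; $f$ is cylindrical on $v$ if $f(x)=f(y)$ whenever $x\overset{v}{=}y$. A time homogeneous counting process with generic intensity $\phi^i:\mathcal{X}\to\mathbb{R}_+$ has stochastic intensity at time $t$ equal to $\phi^i$ of the past configuration before $t$ shifted so that $t$ becomes $0$. If $\mathcal{V}^i$ is the minimal subset of $\mathbf{I}\times(-\infty,0)$ on which $\phi^i$ is cylindrical, a countable family $\mathbf{V}^i$ of finite neighborhoods is coherent if $\mathcal{V}^i\subset\bigcup_{v\in\mathbf{V}^i}v$. Kalikow decomposition w.r.t. $(\mathbf{V}^i)$ and $\mathcal{Y}$: for each $i$ a probability $\lambda^i$ on $\mathbf{V}^i$ and functions $\phi^i_v\ge0$ cylindrical on $v$ with $\phi^i(x)=\sum_{v}\lambda^i(v)\phi^i_v(x)$ for all $x\in\mathcal{X}\cap\mathcal{Y}$. *)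

theory Defs
  imports "HOL-Analysis.Analysis"
begin

type_synonym 'i config = "'i \<Rightarrow> real set"

definition config_space :: "'i config set" where
  "config_space = {x. \<forall>i. x i \<subseteq> {..<0} \<and> (\<forall>a b. finite (x i \<inter> {a..b}))}"

definition agree_on :: "('i \<times> real) set \<Rightarrow> 'i config \<Rightarrow> 'i config \<Rightarrow> bool" where
  "agree_on v x y \<longleftrightarrow> (\<forall>(j,t)\<in>v. (t \<in> x j \<longleftrightarrow> t \<in> y j))"

definition finite_nbhd :: "('i \<times> real) set \<Rightarrow> bool" where
  "finite_nbhd v \<longleftrightarrow> v \<subseteq> UNIV \<times> {..<0} \<and> (\<forall>j. {t. (j,t) \<in> v} \<in> sets borel)
     \<and> (\<exists>J a b. finite J \<and> v \<subseteq> J \<times> {a..b})"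

definition cylindrical_on :: "('i config \<Rightarrow> real) \<Rightarrow> ('i \<times> real) set \<Rightarrow> bool" where
  "cylindrical_on f v \<longleftrightarrow>
     (\<forall>x\<in>config_space. \<forall>y\<in>config_space. agree_on v x y \<longrightarrow> f x = f y)"

text \<open>The minimal subset of I x (-inf,0) on which f is cylindrical (when it exists it is
  the intersection of all such subsets).\<close>

definition dependence_set :: "('i config \<Rightarrow> real) \<Rightarrow> ('i \<times> real) set" where
  "dependence_set f = \<Inter>{v. v \<subseteq> UNIV \<times> {..<0} \<and> cylindrical_on f v}"

definition coherent :: "('i config \<Rightarrow> real) \<Rightarrow> (nat \<Rightarrow> ('i \<times> real) set) \<Rightarrow> bool" where
  "coherent f V \<longleftrightarrow> (\<forall>k. finite_nbhd (V k)) \<and> dependence_set f \<subseteq> (\<Union>k. V k)"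

text \<open>Kalikow decomposition of the generic intensities phi w.r.t. the families V i and Y,
  with weights lam i k on the neighborhood V i k and functions phiv i k.\<close>

definition kalikow_decomposition ::
  "('i \<Rightarrow> 'i config \<Rightarrow> real) \<Rightarrow> ('i \<Rightarrow> nat \<Rightarrow> ('i \<times> real) set) \<Rightarrow> 'i config set
   \<Rightarrow> ('i \<Rightarrow> nat \<Rightarrow> real) \<Rightarrow> ('i \<Rightarrow> nat \<Rightarrow> 'i config \<Rightarrow> real) \<Rightarrow> bool" where
  "kalikow_decomposition phi V Y lam phiv \<longleftrightarrow>
     (\<forall>i. (\<forall>k. 0 \<le> lam i k) \<and> lam i sums 1
        \<and> (\<forall>k. cylindrical_on (phiv i k) (V i k) \<and> (\<forall>x\<in>config_space. 0 \<le> phiv i k x))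
        \<and> (\<forall>x\<in>config_space \<inter> Y. (\<lambda>k. lam i k * phiv i k x) sums phi i x))"

text \<open>Convention: outside the configurations for which this set is nonempty, Delta is set to 0
  (there the informal definition involves an infimum over the empty set).\<close>

definition inf_nbhd ::
  "('i \<Rightarrow> 'i config \<Rightarrow> real) \<Rightarrow> ('i \<Rightarrow> nat \<Rightarrow> ('i \<times> real) set) \<Rightarrow> 'i config set
   \<Rightarrow> 'i \<Rightarrow> nat \<Rightarrow> 'i config \<Rightarrow> real" where
  "inf_nbhd phi V Y i k x = Inf (phi i ` {y \<in> Y. agree_on (V i k) y x})"

fun Delta ::
  "('i \<Rightarrow> 'i config \<Rightarrow> real) \<Rightarrow> ('i \<Rightarrow> nat \<Rightarrow> ('i \<times> real) set) \<Rightarrow> 'i config set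
   \<Rightarrow> 'i \<Rightarrow> nat \<Rightarrow> 'i config \<Rightarrow> real" where
  "Delta phi V Y i 0 x =
     (if {y \<in> Y. agree_on (V i 0) y x} = {} then 0 else inf_nbhd phi V Y i 0 x)"
| "Delta phi V Y i (Suc k) x =
     (if {y \<in> Y. agree_on (V i (Suc k)) y x} = {} then 0
      else inf_nbhd phi V Y i (Suc k) x - inf_nbhd phi V Y i k x)"

end

theory Submission
  imports Defs
begin

text \<open>Along the increasing neighborhoods \<open>V i k\<close>, the infimum of \<open>phi i\<close> over the configurations
  of \<open>Y\<close> agreeing with \<open>x\<close> on \<open>V i k\<close> increases in \<open>k\<close>; its increments \<open>Delta\<close> are therefore
  nonnegative, depend only on \<open>V i k\<close>, and telescope to that infimum, which converges to
  \<open>phi i x\<close> by the uniform continuity hypothesis. Where \<open>lam i k = 0\<close> the hypothesis on \<open>lam\<close>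
  forces \<open>Delta\<close> to vanish, so the junk value \<open>Delta / 0 = 0\<close> does no harm.\<close>

abbreviation agreeing :: "'i config set \<Rightarrow> ('i \<times> real) set \<Rightarrow> 'i config \<Rightarrow> 'i config set" where
  "agreeing Y v x \<equiv> {y \<in> Y. agree_on v y x}"

lemma agree_on_refl: "agree_on v x x"
  unfolding agree_on_def by auto

lemma agree_on_subset: "v \<subseteq> w \<Longrightarrow> agree_on w y x \<Longrightarrow> agree_on v y x"
  unfolding agree_on_def by blast

lemma agreeing_cong: "agree_on v x x' \<Longrightarrow> agreeing Y v x = agreeing Y v x'"
  unfolding agree_on_def by auto

lemma agreeing_anti_mono: "v \<subseteq> w \<Longrightarrow> agreeing Y w x \<subseteq> agreeing Y v x"
  using agree_on_subset by blast

context
  fixes phi :: "'i \<Rightarrow> 'i config \<Rightarrow> real" and V :: "'i \<Rightarrow> nat \<Rightarrow> ('i \<times> real) set"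
    and Y :: "'i config set" and i :: 'i
begin

lemma bdd_below_phi_agreeing:
  assumes "\<And>y. y \<in> Y \<Longrightarrow> 0 \<le> phi i y"
  shows "bdd_below (phi i ` agreeing Y v x)"
  using assms by (auto intro!: bdd_belowI[where m = 0])

lemma inf_nbhd_nonneg:
  assumes "\<And>y. y \<in> Y \<Longrightarrow> 0 \<le> phi i y" and "agreeing Y (V i k) x \<noteq> {}"
  shows "0 \<le> inf_nbhd phi V Y i k x"
  unfolding inf_nbhd_def using assms by (intro cInf_greatest) auto

lemma inf_nbhd_le:
  assumes "\<And>y. y \<in> Y \<Longrightarrow> 0 \<le> phi i y" and "x \<in> Y"
  shows "inf_nbhd phi V Y i k x \<le> phi i x"
  unfolding inf_nbhd_def
  using assms agree_on_refl by (intro cInf_lower bdd_below_phi_agreeing) auto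

lemma inf_nbhd_mono:
  assumes "\<And>y. y \<in> Y \<Longrightarrow> 0 \<le> phi i y" and "V i k \<subseteq> V i (Suc k)"
    and "agreeing Y (V i (Suc k)) x \<noteq> {}"
  shows "inf_nbhd phi V Y i k x \<le> inf_nbhd phi V Y i (Suc k) x"
  unfolding inf_nbhd_def using assms agreeing_anti_mono[OF assms(2), of Y x]
  by (intro cInf_superset_mono bdd_below_phi_agreeing) auto

lemma Delta_nonneg:
  assumes "\<And>y. y \<in> Y \<Longrightarrow> 0 \<le> phi i y" and "\<And>k. V i k \<subseteq> V i (Suc k)"
  shows "0 \<le> Delta phi V Y i k x"
proof (cases k)
  case 0
  then show ?thesis using inf_nbhd_nonneg[OF assms(1)] by auto
next
  case (Suc m)
  then show ?thesis using inf_nbhd_mono[OF assms(1) assms(2)] by auto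
qed

lemma Delta_cong:
  assumes "\<And>k. V i k \<subseteq> V i (Suc k)" and "agree_on (V i k) x x'"
  shows "Delta phi V Y i k x = Delta phi V Y i k x'"
proof (cases k)
  case 0
  show ?thesis
    unfolding 0 Delta.simps inf_nbhd_def agreeing_cong[OF assms(2)[unfolded 0], of Y] ..
next
  case (Suc m)
  have agree: "agree_on (V i m) x x'"
    using agree_on_subset[OF assms(1)] assms(2) Suc by blast
  show ?thesis
    unfolding Suc Delta.simps inf_nbhd_def agreeing_cong[OF assms(2)[unfolded Suc], of Y]
      agreeing_cong[OF agree, of Y] ..
qed

lemma sum_Delta_eq_inf_nbhd:
  assumes "x \<in> Y"
  shows "(\<Sum>k<Suc n. Delta phi V Y i k x) = inf_nbhd phi V Y i n x"
proof (induction n)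
  case 0
  show ?case using assms agree_on_refl by auto
next
  case (Suc n)
  have "x \<in> agreeing Y (V i (Suc n)) x" using assms agree_on_refl by auto
  then show ?case using Suc by auto
qed

lemma inf_nbhd_tendsto:
  assumes nonneg: "\<And>y. y \<in> Y \<Longrightarrow> 0 \<le> phi i y" and "x \<in> Y"
    and close: "\<And>\<epsilon>. \<epsilon> > 0 \<Longrightarrow> \<exists>K. \<forall>k\<ge>K. \<forall>y\<in>agreeing Y (V i k) x. \<bar>phi i y - phi i x\<bar> \<le> \<epsilon>"
  shows "(\<lambda>k. inf_nbhd phi V Y i k x) \<longlonglongrightarrow> phi i x"
proof (rule LIMSEQ_I)
  fix r :: real
  assume "0 < r"
  then obtain K where K: "\<And>k y. k \<ge> K \<Longrightarrow> y \<in> agreeing Y (V i k) x \<Longrightarrow> \<bar>phi i y - phi i x\<bar> \<le> r/2"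
    using close[of "r/2"] by auto
  have "\<bar>inf_nbhd phi V Y i k x - phi i x\<bar> < r" if "k \<ge> K" for k
  proof -
    have "phi i x - r/2 \<le> inf_nbhd phi V Y i k x"
      unfolding inf_nbhd_def
    proof (rule cInf_greatest)
      show "phi i ` agreeing Y (V i k) x \<noteq> {}" using \<open>x \<in> Y\<close> agree_on_refl by blast
    next
      fix z
      assume "z \<in> phi i ` agreeing Y (V i k) x"
      then obtain y where y: "y \<in> agreeing Y (V i k) x" and z: "z = phi i y" by blast
      have "\<bar>phi i y - phi i x\<bar> \<le> r/2" using K[OF that y] .
      then show "phi i x - r/2 \<le> z" unfolding z by linarith
    qed
    then show ?thesis using inf_nbhd_le[OF nonneg \<open>x \<in> Y\<close>, of k] \<open>0 < r\<close> by linarith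
  qed
  then show "\<exists>K. \<forall>k\<ge>K. norm (inf_nbhd phi V Y i k x - phi i x) < r" by auto
qed

lemma Delta_sums:
  assumes "\<And>y. y \<in> Y \<Longrightarrow> 0 \<le> phi i y" and "x \<in> Y"
    and "\<And>\<epsilon>. \<epsilon> > 0 \<Longrightarrow> \<exists>K. \<forall>k\<ge>K. \<forall>y\<in>agreeing Y (V i k) x. \<bar>phi i y - phi i x\<bar> \<le> \<epsilon>"
  shows "(\<lambda>k. Delta phi V Y i k x) sums phi i x"
proof -
  have "(\<lambda>n. \<Sum>k<Suc n. Delta phi V Y i k x) \<longlonglongrightarrow> phi i x"
    unfolding sum_Delta_eq_inf_nbhd[OF assms(2)] by (rule inf_nbhd_tendsto[OF assms])
  then show ?thesis unfolding sums_def by (rule LIMSEQ_imp_Suc)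
qed

end

theorem mainTheorem3:
  fixes phi :: "'i::countable \<Rightarrow> 'i config \<Rightarrow> real"
    and V :: "'i \<Rightarrow> nat \<Rightarrow> ('i \<times> real) set"
    and Y :: "'i config set"
    and lam :: "'i \<Rightarrow> nat \<Rightarrow> real"
  assumes phi_nonneg: "\<And>i x. x \<in> config_space \<Longrightarrow> 0 \<le> phi i x"
    and coh: "\<And>i. coherent (phi i) (V i)"
    and incr: "\<And>i k. V i k \<subseteq> V i (Suc k)"
    and Y_sub: "Y \<subseteq> config_space"
    and unif: "\<And>\<epsilon>. \<epsilon> > 0 \<Longrightarrow> \<exists>K. \<forall>k\<ge>K. \<forall>i. \<forall>x\<in>Y. \<forall>y\<in>Y.
                   agree_on (V i k) x y \<longrightarrow> \<bar>phi i x - phi i y\<bar> \<le> \<epsilon>"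
    and lam_nonneg: "\<And>i k. 0 \<le> lam i k"
    and lam_prob: "\<And>i. lam i sums 1"
    and lam_zero: "\<And>i k. lam i k = 0 \<Longrightarrow>
                     (SUP x\<in>config_space \<inter> Y. ereal (Delta phi V Y i k x)) = 0"
  shows "kalikow_decomposition phi V Y lam (\<lambda>i k x. Delta phi V Y i k x / lam i k)"
proof -
  have nonneg: "\<And>y. y \<in> Y \<Longrightarrow> 0 \<le> phi i y" for i
    using phi_nonneg Y_sub by blast
  have Delta_ge_0: "0 \<le> Delta phi V Y i k x" for i k x
    by (rule Delta_nonneg[where V = V, OF nonneg incr])
  have Delta_zero: "Delta phi V Y i k x = 0" if "lam i k = 0" "x \<in> config_space \<inter> Y" for i k x
  proof -
    have "ereal (Delta phi V Y i k x) \<le> 0"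
      using SUP_upper[OF that(2), of "\<lambda>x. ereal (Delta phi V Y i k x)"] lam_zero[OF that(1)] by simp
    then show ?thesis using Delta_ge_0[of i k x] by simp
  qed
  have close: "\<exists>K. \<forall>k\<ge>K. \<forall>y\<in>agreeing Y (V i k) x. \<bar>phi i y - phi i x\<bar> \<le> \<epsilon>"
    if "x \<in> Y" "\<epsilon> > 0" for i x \<epsilon>
    using unif[OF that(2)] that(1) by blast
  have "(\<lambda>k. lam i k * (Delta phi V Y i k x / lam i k)) sums phi i x"
    if "x \<in> config_space \<inter> Y" for i x
  proof -
    have "(\<lambda>k. Delta phi V Y i k x) sums phi i x"
      using that by (intro Delta_sums nonneg close) auto
    moreover have "lam i k * (Delta phi V Y i k x / lam i k) = Delta phi V Y i k x" for k
      using Delta_zero[OF _ that] by (cases "lam i k = 0") simp_all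
    ultimately show ?thesis by simp
  qed
  moreover have "cylindrical_on (\<lambda>x. Delta phi V Y i k x / lam i k) (V i k)" for i k
    unfolding cylindrical_on_def using Delta_cong[where V = V, OF incr] by auto
  ultimately show ?thesis
    unfolding kalikow_decomposition_def using lam_nonneg lam_prob Delta_ge_0 by simp
qed

end
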